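(* For every $k\ge0$, the restriction $f_k$ of $f$ to $\mathcal{P}_k$ is an order isomorphism from $\mathcal{P}_k$ (with pattern containment order) onto $\widehat{\mathcal{A}}_{k+1}$ (with subword order): it is a bijection, and for $\sigma,\pi\in\mathcal{P}_k$ we have $\sigma\le\pi$ if and only if $f(\sigma)\le f(\pi)$.
   Context: A permutation of length $n\ge1$ is a word $\pi=\pi_1\cdots\pi_n$ containing each of $1,\dots,n$ exactly once. $\sigma\le\pi$ (pattern containment) if $\pi$ has a subsequence whose letters are in the same relative order as the letters of $\sigma$. A descent of $\pi$ is an index $i$ with $\pi_i>\pi_{i+1}$; $\mathcal{P}_k$ is the set of permutations with exactly $k$ descents, with the induced order. For a letter $c$ of $\pi$, $d_\pi(c)$ is $1$ plus the number of descents at indices before the position of $c$. Words are finite sequences of positive integers with subword order: $v\le w$ if $v$ equals some (not necessarily consecutive) subsequence of $w$. $\max(w)$ is the largest letter of $w$. $\widehat{\mathcal{A}}_k$ is the set of words $w$ with $\max(w)=k$ such that (AC1) each $i\in\{1,\dots,k\}$ occurs in $w$, and (AC2) for each $i\in\{1,\dots,k-1\}$ the rightmost occurrence of $i$ is preceded by an occurrence of $i+1$, with subword order. $f(\pi)=d_\pi(1)d_\pi(2)\cdots d_\pi(n)$. *)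

theory Defs
  imports Main "HOL-Library.Sublist"
begin

definition is_perm :: "nat list \<Rightarrow> bool" where
  "is_perm p \<longleftrightarrow> p \<noteq> [] \<and> distinct p \<and> set p = {1..length p}"

definition order_iso_seq :: "nat list \<Rightarrow> nat list \<Rightarrow> bool" where
  "order_iso_seq xs ys \<longleftrightarrow> length xs = length ys \<and>
     (\<forall>i < length xs. \<forall>j < length xs. xs ! i < xs ! j \<longleftrightarrow> ys ! i < ys ! j)"

definition contains_pattern :: "nat list \<Rightarrow> nat list \<Rightarrow> bool" where
  "contains_pattern sigma pi \<longleftrightarrow> (\<exists>s. subseq s pi \<and> order_iso_seq sigma s)"

text \<open>Descents (0-based indices i with p_i > p_(i+1)).\<close>
definition descents :: "nat list \<Rightarrow> nat set" where
  "descents p = {i. Suc i < length p \<and> p ! i > p ! Suc i}"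

definition P :: "nat \<Rightarrow> nat list set" where
  "P k = {p. is_perm p \<and> card (descents p) = k}"

text \<open>0-based position of letter c in p (c occurs exactly once when p is a permutation).\<close>
definition pos :: "nat list \<Rightarrow> nat \<Rightarrow> nat" where
  "pos p c = (THE i. i < length p \<and> p ! i = c)"

definition dval :: "nat list \<Rightarrow> nat \<Rightarrow> nat" where
  "dval p c = 1 + card {i \<in> descents p. i < pos p c}"

definition f :: "nat list \<Rightarrow> nat list" where
  "f p = map (dval p) [1..<Suc (length p)]"

text \<open>Words are finite sequences of positive integers; subword order is subseq.\<close>
definition Ahat :: "nat \<Rightarrow> nat list set" where
  "Ahat k = {w. 0 \<notin> set w \<and> w \<noteq> [] \<and> Max (set w) = k
      \<and> (\<forall>i \<in> {1..k}. i \<in> set w)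
      \<and> (\<forall>i \<in> {1..<k}. \<exists>j l. j < l \<and> l < length w \<and> w ! j = Suc i \<and> w ! l = i
             \<and> (\<forall>l'. l < l' \<and> l' < length w \<longrightarrow> w ! l' \<noteq> i))}"

end

theory Submission
  imports Defs "HOL-Library.Product_Lexorder"
begin

text \<open>
  Call run p i the number of the ascending run of the permutation p that contains
  position i, i.e. one plus the number of descents before i; then the code word f p records,
  for every letter c, the run of c.  Within a permutation the position order is the
  lexicographic order of the pairs (run, letter).  Hence an occurrence of sigma in pi whose
  positions keep their run numbers (a run matching) yields a subword embedding of the code
  words, and conversely a subword embedding of the code words yields such an occurrence.  For
  sigma, pi with the same number k of descents every occurrence is a run matching: along an
  occurrence the run number of pi grows at least as fast as that of sigma, and both start at 1
  and cannot exceed k + 1.  This gives the order isomorphism, and injectivity follows since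
  equal code words force equal permutations.  For surjectivity a word w in Ahat (k + 1) is
  decoded by listing the letters c in increasing order of (w (c), c); conditions (AC1) and
  (AC2) make the runs of this permutation exactly the levels prescribed by w.
\<close>

definition index_embedding :: "(nat \<Rightarrow> nat) \<Rightarrow> 'a list \<Rightarrow> 'a list \<Rightarrow> bool" where
  "index_embedding g xs ys \<longleftrightarrow> strict_mono_on {..<length xs} g \<and>
     (\<forall>i < length xs. g i < length ys \<and> xs ! i = ys ! g i)"

lemma subseq_imp_index_embedding:
  assumes "subseq xs ys"
  shows "\<exists>g. index_embedding g xs ys"
  using assms
proof (induction rule: list_emb.induct)
  case (list_emb_Nil ys)
  then show ?case by (auto simp: index_embedding_def)
next
  case (list_emb_Cons xs ys y)
  then obtain g where "index_embedding g xs ys" by blast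
  then have "index_embedding (Suc \<circ> g) xs (y # ys)"
    by (auto simp: index_embedding_def monotone_on_def)
  then show ?case by blast
next
  case (list_emb_Cons2 x y xs ys)
  then obtain g where "index_embedding g xs ys" by blast
  then have "index_embedding (case_nat 0 (Suc \<circ> g)) (x # xs) (y # ys)"
    using list_emb_Cons2(1)
    by (auto simp: index_embedding_def monotone_on_def nth_Cons' split: nat.splits)
  then show ?case by blast
qed

lemma index_embedding_imp_subseq:
  assumes "index_embedding g xs ys"
  shows "subseq xs ys"
  using assms
proof (induction xs arbitrary: ys rule: rev_induct)
  case Nil
  then show ?case by simp
next
  case (snoc x xs)
  define j where "j = g (length xs)"
  have mono: "strict_mono_on {..<Suc (length xs)} g"
    and vals: "\<And>i. i < Suc (length xs) \<Longrightarrow> g i < length ys \<and> (xs @ [x]) ! i = ys ! g i"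
    using snoc.prems by (auto simp: index_embedding_def)
  have j: "j < length ys" "ys ! j = x"
    using vals[of "length xs"] by (auto simp: j_def)
  have "g i < j \<and> xs ! i = ys ! g i" if "i < length xs" for i
    using strict_mono_onD[OF mono] vals[of i] that by (simp add: j_def nth_append)
  then have "index_embedding g xs (take j ys)"
    using mono j(1) by (auto simp: index_embedding_def monotone_on_def)
  then have "subseq (xs @ [x]) (take j ys @ [ys ! j])"
    using snoc.IH j by (simp add: list_emb_append_mono)
  also have "take j ys @ [ys ! j] = take (Suc j) ys"
    using j by (simp add: take_Suc_conv_app_nth)
  finally show ?case
    using prefix_imp_subseq[OF take_is_prefix] subseq_order.trans by blast
qed

lemma perm_nth:
  assumes "is_perm p" "i < length p"
  shows "p ! i \<in> {1..length p}"
  using assms nth_mem unfolding is_perm_def by blast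

lemma perm_pos:
  assumes "is_perm p" "c \<in> {1..length p}"
  shows "pos p c < length p \<and> p ! pos p c = c"
proof -
  have distinct: "distinct p" and letters: "set p = {1..length p}"
    using assms(1) by (auto simp: is_perm_def)
  obtain i where i: "i < length p" "p ! i = c"
    using assms(2) letters by (metis in_set_conv_nth)
  have "pos p c = i"
    unfolding pos_def using i distinct by (auto simp: nth_eq_iff_index_eq)
  then show ?thesis using i by simp
qed

lemma pos_nth:
  assumes "is_perm p" "i < length p"
  shows "pos p (p ! i) = i"
  using assms perm_pos[OF assms(1) perm_nth[OF assms]]
  by (metis is_perm_def nth_eq_iff_index_eq)

lemma perm_nth_eq_rank:
  assumes "is_perm p" "i < length p"
  shows "p ! i = Suc (card {j. j < length p \<and> p ! j < p ! i})"
proof -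
  have distinct: "distinct p" and letters: "set p = {1..length p}"
    using assms(1) by (auto simp: is_perm_def)
  have "(!) p ` {j. j < length p \<and> p ! j < p ! i} = {x \<in> set p. x < p ! i}"
    by (auto simp: in_set_conv_nth)
  also have "\<dots> = {1..<p ! i}"
    using letters perm_nth[OF assms] by auto
  finally have "card {j. j < length p \<and> p ! j < p ! i} = card {1..<p ! i}"
    using distinct by (metis (no_types, lifting) card_image inj_on_nth mem_Collect_eq)
  then show ?thesis using perm_nth[OF assms] by simp
qed

lemma perm_eq_if_order_iso:
  assumes "is_perm p" "is_perm q" "order_iso_seq p q"
  shows "p = q"
proof (rule nth_equalityI)
  show length: "length p = length q"
    using assms(3) by (simp add: order_iso_seq_def)
  fix i assume i: "i < length p"
  have "{j. j < length p \<and> p ! j < p ! i} = {j. j < length q \<and> q ! j < q ! i}"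
    using assms(3) i length by (auto simp: order_iso_seq_def)
  then show "p ! i = q ! i"
    using perm_nth_eq_rank[OF assms(1) i] perm_nth_eq_rank[OF assms(2)] i length by simp
qed

definition run :: "nat list \<Rightarrow> nat \<Rightarrow> nat" where
  "run p i = 1 + card {j \<in> descents p. j < i}"

lemma dval_eq_run: "dval p c = run p (pos p c)"
  by (simp add: dval_def run_def)

lemma finite_descents: "finite (descents p)"
  by (rule finite_subset[of _ "{..<length p}"]) (auto simp: descents_def)

lemma run_0: "run p 0 = 1"
  by (simp add: run_def)

lemma run_Suc: "run p (Suc i) = run p i + (if i \<in> descents p then 1 else 0)"
proof -
  have "{j \<in> descents p. j < Suc i} =
        (if i \<in> descents p then insert i else id) {j \<in> descents p. j < i}"
    by (auto simp: less_Suc_eq)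
  then show ?thesis
    using finite_descents[of p] by (simp add: run_def)
qed

lemma run_mono: "i \<le> i' \<Longrightarrow> run p i \<le> run p i'"
  unfolding run_def by (auto intro!: card_mono finite_descents)

lemma run_le: "run p i \<le> Suc (card (descents p))"
  unfolding run_def by (auto intro!: card_mono finite_descents)

lemma run_last: "run p (length p - 1) = Suc (card (descents p))"
proof -
  have "{j \<in> descents p. j < length p - 1} = descents p"
    by (auto simp: descents_def)
  then show ?thesis by (simp add: run_def)
qed

lemma nth_mono_without_descents:
  assumes "i \<le> i'" "i' < length p" "\<And>d. i \<le> d \<Longrightarrow> d < i' \<Longrightarrow> d \<notin> descents p"
  shows "p ! i \<le> p ! i'"
  using assms
proof (induction i' rule: dec_induct)
  case base
  then show ?case by simp
next
  case (step m)
  then have "p ! i \<le> p ! m" and "m \<notin> descents p" by auto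
  then show ?case using step.prems(1) by (auto simp: descents_def)
qed

lemma run_strict:
  assumes "i < i'" "i' < length p" "p ! i' < p ! i"
  shows "run p i < run p i'"
proof -
  obtain d where d: "i \<le> d" "d < i'" "d \<in> descents p"
    using nth_mono_without_descents[of i i' p] assms by fastforce
  have "run p i \<le> run p d" using d run_mono by blast
  also have "\<dots> < run p (Suc d)" using d run_Suc by simp
  also have "\<dots> \<le> run p i'" using d run_mono by (simp add: Suc_leI)
  finally show ?thesis .
qed

lemma position_order_by_run:
  assumes "distinct p" "i < length p" "i' < length p"
  shows "i < i' \<longleftrightarrow> run p i < run p i' \<or> (run p i = run p i' \<and> p ! i < p ! i')"
proof -
  have forward: "run p a < run p b \<or> (run p a = run p b \<and> p ! a < p ! b)"
    if "a < b" "b < length p" for a b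
  proof -
    have "p ! a \<noteq> p ! b" using assms(1) that by (simp add: nth_eq_iff_index_eq)
    moreover have "p ! b < p ! a \<Longrightarrow> run p a < run p b" using run_strict that by blast
    moreover have "run p a \<le> run p b" using run_mono that by simp
    ultimately show ?thesis by linarith
  qed
  show ?thesis
  proof
    assume "i < i'"
    then show "run p i < run p i' \<or> (run p i = run p i' \<and> p ! i < p ! i')"
      using forward assms by blast
  next
    assume lex: "run p i < run p i' \<or> (run p i = run p i' \<and> p ! i < p ! i')"
    show "i < i'"
    proof (rule ccontr)
      assume "\<not> i < i'"
      then have "i' < i \<or> i' = i" by auto
      then show False using forward[of i' i] assms lex by auto
    qed
  qed
qed

lemma run_enters:
  assumes "2 \<le> j" "j \<le> run p m"
  shows "\<exists>t < m. t \<in> descents p \<and> run p (Suc t) = j"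
  using assms(2)
proof (induction m)
  case 0
  then show ?case using assms(1) run_0[of p] by simp
next
  case (Suc m)
  show ?case
  proof (cases "j \<le> run p m")
    case True
    then show ?thesis using Suc.IH less_SucI by blast
  next
    case False
    then have "m \<in> descents p" and "run p (Suc m) = j"
      using Suc.prems run_Suc[of p m] by (auto split: if_splits)
    then show ?thesis by blast
  qed
qed

lemma run_image:
  assumes "p \<noteq> []"
  shows "run p ` {..<length p} = {1..Suc (card (descents p))}"
proof
  show "run p ` {..<length p} \<subseteq> {1..Suc (card (descents p))}"
    using run_le by (auto simp: run_def)
next
  show "{1..Suc (card (descents p))} \<subseteq> run p ` {..<length p}"
  proof
    fix j assume j: "j \<in> {1..Suc (card (descents p))}"
    show "j \<in> run p ` {..<length p}"
    proof (cases "j = 1")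
      case True
      then show ?thesis using assms run_0[of p] by force
    next
      case False
      then obtain t where "t < length p - 1" "run p (Suc t) = j"
        using run_enters[of j p "length p - 1"] j run_last[of p] by auto
      then show ?thesis by force
    qed
  qed
qed

text \<open>The code word stores at index c - 1 the run number of the letter c.\<close>
lemma length_f: "length (f p) = length p"
  by (simp add: f_def del: upt_Suc)

lemma f_nth: "j < length p \<Longrightarrow> f p ! j = run p (pos p (Suc j))"
  by (simp add: f_def dval_eq_run del: upt_Suc)

lemma f_at_letter:
  assumes "is_perm p" "t < length p"
  shows "f p ! (p ! t - 1) = run p t"
proof -
  have "p ! t - 1 < length p" "Suc (p ! t - 1) = p ! t"
    using perm_nth[OF assms] by auto
  then show ?thesis using f_nth pos_nth[OF assms] by metis
qed

lemma set_f:
  assumes "is_perm p"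
  shows "set (f p) = {1..Suc (card (descents p))}"
proof -
  have "set (f p) = run p ` {..<length p}"
  proof
    show "set (f p) \<subseteq> run p ` {..<length p}"
      using perm_pos[OF assms] by (auto simp: in_set_conv_nth length_f f_nth)
    show "run p ` {..<length p} \<subseteq> set (f p)"
    proof
      fix x assume "x \<in> run p ` {..<length p}"
      then obtain t where t: "t < length p" "x = run p t" by auto
      have "p ! t - 1 < length (f p)"
        using perm_nth[OF assms t(1)] by (auto simp: length_f)
      then show "x \<in> set (f p)" using f_at_letter[OF assms t(1)] t(2) nth_mem by metis
    qed
  qed
  also have "\<dots> = {1..Suc (card (descents p))}"
    using assms by (simp add: run_image is_perm_def)
  finally show ?thesis .
qed

text \<open>Condition (AC2) for f p: the run i ends with a descent into run i + 1; the letter at that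
  descent's bottom has code i + 1, the letter at its top is the last letter with code i.\<close>
lemma f_last_occurrence:
  assumes "is_perm p" "1 \<le> i" "i \<le> card (descents p)"
  shows "\<exists>j l. j < l \<and> l < length (f p) \<and> f p ! j = Suc i \<and> f p ! l = i
             \<and> (\<forall>l'. l < l' \<and> l' < length (f p) \<longrightarrow> f p ! l' \<noteq> i)"
proof -
  let ?n = "length p"
  obtain t where t: "t < ?n - 1" "t \<in> descents p" "run p (Suc t) = Suc i"
    using run_enters[of "Suc i" p "?n - 1"] assms(2,3) run_last[of p] by auto
  have run_t: "run p t = i" using t run_Suc[of p t] by simp
  have t_len: "Suc t < ?n" using t by simp
  have drop: "p ! Suc t < p ! t" using t(2) by (simp add: descents_def)
  define j where "j = p ! Suc t - 1"
  define l where "l = p ! t - 1"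
  have letters: "p ! t \<in> {1..?n}" "p ! Suc t \<in> {1..?n}"
    using perm_nth[OF assms(1)] t_len by auto
  have "j < l" "l < length (f p)"
    using drop letters by (auto simp: j_def l_def length_f)
  moreover have "f p ! j = Suc i" "f p ! l = i"
    using f_at_letter[OF assms(1)] t_len t(3) run_t by (auto simp: j_def l_def)
  moreover have "f p ! l' \<noteq> i" if l': "l < l'" "l' < length (f p)" for l'
  proof
    assume l'_value: "f p ! l' = i"
    define q where "q = pos p (Suc l')"
    have q: "q < ?n" "p ! q = Suc l'"
      using perm_pos[OF assms(1), of "Suc l'"] l' by (auto simp: q_def length_f)
    have run_q: "run p q = i" using l'_value f_nth l' by (simp add: q_def length_f)
    have "q < Suc t"
      using run_mono[of "Suc t" q p] t(3) run_q by (cases "Suc t \<le> q") auto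
    moreover have "p ! t < p ! q" using q l' letters by (auto simp: l_def)
    ultimately show False
      using position_order_by_run[of p q t] assms(1) run_q run_t t_len
      by (auto simp: is_perm_def less_Suc_eq)
  qed
  ultimately show ?thesis by blast
qed

lemma f_in_Ahat:
  assumes "p \<in> P k"
  shows "f p \<in> Ahat (Suc k)"
proof -
  have perm: "is_perm p" and card: "card (descents p) = k"
    using assms by (auto simp: P_def)
  have letters: "set (f p) = {1..Suc k}" using set_f[OF perm] card by simp
  then have "f p \<noteq> []" by auto
  moreover have "Max (set (f p)) = Suc k" using letters by (auto intro: Max_eqI)
  ultimately show ?thesis
    using letters f_last_occurrence[OF perm] card unfolding Ahat_def by auto
qed

definition run_matching :: "nat list \<Rightarrow> nat list \<Rightarrow> (nat \<Rightarrow> nat) \<Rightarrow> bool" where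
  "run_matching sigma pi h \<longleftrightarrow>
     (\<forall>t < length sigma. h t < length pi \<and> run pi (h t) = run sigma t) \<and>
     (\<forall>t < length sigma. \<forall>t' < length sigma. sigma ! t < sigma ! t' \<longleftrightarrow> pi ! h t < pi ! h t')"

text \<open>By the lexicographic description of the position order, a run matching is strictly
  increasing, so it exhibits sigma as a pattern in pi.\<close>
lemma run_matching_imp_pattern:
  assumes sigma: "is_perm sigma" and pi: "is_perm pi" and matching: "run_matching sigma pi h"
  shows "contains_pattern sigma pi"
proof -
  let ?m = "length sigma"
  have h: "h t < length pi" "run pi (h t) = run sigma t" if "t < ?m" for t
    using matching that by (auto simp: run_matching_def)
  have order: "sigma ! t < sigma ! t' \<longleftrightarrow> pi ! h t < pi ! h t'" if "t < ?m" "t' < ?m" for t t'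
    using matching that by (auto simp: run_matching_def)
  have "strict_mono_on {..<?m} h"
  proof (rule monotone_onI)
    fix t t' assume t: "t \<in> {..<?m}" and t': "t' \<in> {..<?m}" and "t < t'"
    then have "run sigma t < run sigma t' \<or> (run sigma t = run sigma t' \<and> sigma ! t < sigma ! t')"
      using position_order_by_run[of sigma t t'] sigma by (auto simp: is_perm_def)
    then have "run pi (h t) < run pi (h t') \<or> (run pi (h t) = run pi (h t') \<and> pi ! h t < pi ! h t')"
      using h order t t' by auto
    then show "h t < h t'"
      using position_order_by_run[of pi "h t" "h t'"] pi h t t' by (auto simp: is_perm_def)
  qed
  then have "index_embedding h (map (\<lambda>t. pi ! h t) [0..<?m]) pi"
    using h by (auto simp: index_embedding_def)
  moreover have "order_iso_seq sigma (map (\<lambda>t. pi ! h t) [0..<?m])"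
    using order by (auto simp: order_iso_seq_def)
  ultimately show ?thesis
    unfolding contains_pattern_def using index_embedding_imp_subseq by blast
qed

text \<open>A run matching induces a letter map from sigma to pi that is increasing and preserves
  codes, i.e. a subword embedding of the code words.\<close>
lemma run_matching_imp_subword:
  assumes sigma: "is_perm sigma" and pi: "is_perm pi" and matching: "run_matching sigma pi h"
  shows "subseq (f sigma) (f pi)"
proof -
  let ?m = "length sigma" and ?t = "\<lambda>i. pos sigma (Suc i)"
  have h: "h t < length pi" "run pi (h t) = run sigma t" if "t < ?m" for t
    using matching that by (auto simp: run_matching_def)
  have order: "sigma ! t < sigma ! t' \<longleftrightarrow> pi ! h t < pi ! h t'" if "t < ?m" "t' < ?m" for t t'
    using matching that by (auto simp: run_matching_def)
  have t: "?t i < ?m" "sigma ! ?t i = Suc i" if "i < ?m" for i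
    using perm_pos[OF sigma] that by auto
  have target: "pi ! h (?t i) \<in> {1..length pi}" if "i < ?m" for i
    using perm_nth[OF pi h(1)] t that by simp
  define G where "G i = pi ! h (?t i) - 1" for i
  have "index_embedding G (f sigma) (f pi)"
    unfolding index_embedding_def length_f
  proof (intro conjI allI impI)
    show "strict_mono_on {..<?m} G"
    proof (rule monotone_onI)
      fix i j assume "i \<in> {..<?m}" "j \<in> {..<?m}" "i < j"
      then show "G i < G j"
        using order[of "?t i" "?t j"] t[of i] t[of j] target[of i] by (auto simp: G_def)
    qed
  next
    fix i assume "i < ?m"
    then show "G i < length pi" using target unfolding G_def by fastforce
  next
    fix i assume i: "i < ?m"
    have "f sigma ! i = run sigma (?t i)" using f_nth i by simp
    also have "\<dots> = run pi (h (?t i))" using h t i by simp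
    also have "\<dots> = f pi ! G i" using f_at_letter[OF pi h(1)] t i by (simp add: G_def)
    finally show "f sigma ! i = f pi ! G i" .
  qed
  then show ?thesis by (rule index_embedding_imp_subseq)
qed

text \<open>Conversely, an index embedding g of the code words sends the letter c of sigma to the
  letter g (c - 1) + 1 of pi with the same code; on positions this is a run matching.\<close>
lemma subword_imp_run_matching:
  assumes sigma: "is_perm sigma" and pi: "is_perm pi" and sub: "subseq (f sigma) (f pi)"
  shows "\<exists>h. run_matching sigma pi h"
proof -
  let ?m = "length sigma"
  obtain g where "index_embedding g (f sigma) (f pi)"
    using subseq_imp_index_embedding[OF sub] by blast
  then have g_mono: "strict_mono_on {..<?m} g"
    and g: "\<And>i. i < ?m \<Longrightarrow> g i < length pi \<and> f sigma ! i = f pi ! g i"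
    by (auto simp: index_embedding_def length_f)
  define h where "h t = pos pi (Suc (g (sigma ! t - 1)))" for t
  have letter: "sigma ! t - 1 < ?m" "Suc (sigma ! t - 1) = sigma ! t" if "t < ?m" for t
    using perm_nth[OF sigma that] by auto
  have h: "h t < length pi \<and> pi ! h t = Suc (g (sigma ! t - 1))" if t: "t < ?m" for t
  proof -
    have "Suc (g (sigma ! t - 1)) \<in> {1..length pi}" using g[OF letter(1)[OF t]] by simp
    then show ?thesis using perm_pos[OF pi] by (simp add: h_def)
  qed
  have "run pi (h t) = run sigma t" if t: "t < ?m" for t
  proof -
    have "run sigma t = f sigma ! (sigma ! t - 1)" using f_at_letter[OF sigma t] by simp
    also have "\<dots> = f pi ! g (sigma ! t - 1)" using g letter t by simp
    also have "\<dots> = run pi (h t)" using f_nth g letter t by (simp add: h_def)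
    finally show ?thesis by simp
  qed
  moreover have "sigma ! t < sigma ! t' \<longleftrightarrow> pi ! h t < pi ! h t'"
    if t: "t < ?m" and t': "t' < ?m" for t t'
  proof -
    have "sigma ! t < sigma ! t' \<longleftrightarrow> sigma ! t - 1 < sigma ! t' - 1"
      using perm_nth[OF sigma t] perm_nth[OF sigma t'] by auto
    also have "\<dots> \<longleftrightarrow> g (sigma ! t - 1) < g (sigma ! t' - 1)"
      using strict_mono_on_less[OF g_mono] letter t t' by simp
    finally show ?thesis using h t t' by simp
  qed
  ultimately have "run_matching sigma pi h"
    using h by (auto simp: run_matching_def)
  then show ?thesis by blast
qed

text \<open>Along an occurrence of sigma in pi, every descent of sigma forces a drop between the
  matched letters of pi; hence the run number of pi grows at least as fast as that of sigma.\<close>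
lemma run_growth_along_pattern:
  assumes h_mono: "strict_mono_on {..<length sigma} h"
    and h: "\<And>t. t < length sigma \<Longrightarrow> h t < length pi"
    and order: "\<And>t t'. t < length sigma \<Longrightarrow> t' < length sigma \<Longrightarrow>
                  sigma ! t < sigma ! t' \<longleftrightarrow> pi ! h t < pi ! h t'"
    and "t \<le> t'" "t' < length sigma"
  shows "run sigma t' + run pi (h t) \<le> run sigma t + run pi (h t')"
  using assms(4,5)
proof (induction t' rule: dec_induct)
  case base
  then show ?case by simp
next
  case (step u)
  have h_lt: "h u < h (Suc u)" using strict_mono_onD[OF h_mono] step.prems by simp
  have "run sigma (Suc u) + run pi (h u) \<le> run sigma u + run pi (h (Suc u))"
  proof (cases "u \<in> descents sigma")
    case True
    then have "pi ! h (Suc u) < pi ! h u"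
      using order[of "Suc u" u] step.prems by (simp add: descents_def)
    then have "run pi (h u) < run pi (h (Suc u))" using run_strict h_lt h step.prems by blast
    then show ?thesis using True run_Suc[of sigma u] by simp
  next
    case False
    then show ?thesis using run_mono[OF less_imp_le[OF h_lt]] run_Suc[of sigma u] by simp
  qed
  then show ?case using step by simp
qed

text \<open>If sigma and pi have the same number of descents, the run numbers along an occurrence
  start at 1 and end at k + 1 in both, so by the growth estimate they agree everywhere.\<close>
lemma pattern_imp_run_matching:
  assumes sigma: "sigma \<in> P k" and pi: "pi \<in> P k" and pattern: "contains_pattern sigma pi"
  shows "\<exists>h. run_matching sigma pi h"
proof -
  let ?m = "length sigma"
  obtain s where "subseq s pi" and iso: "order_iso_seq sigma s"
    using pattern unfolding contains_pattern_def by blast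
  then obtain h where "index_embedding h s pi"
    using subseq_imp_index_embedding by blast
  moreover have "length s = ?m" using iso by (simp add: order_iso_seq_def)
  ultimately have h_mono: "strict_mono_on {..<?m} h"
    and h: "\<And>t. t < ?m \<Longrightarrow> h t < length pi" "\<And>t. t < ?m \<Longrightarrow> s ! t = pi ! h t"
    by (auto simp: index_embedding_def)
  have order: "sigma ! t < sigma ! t' \<longleftrightarrow> pi ! h t < pi ! h t'"
    if "t < ?m" "t' < ?m" for t t'
    using iso h that by (simp add: order_iso_seq_def)
  note growth = run_growth_along_pattern[OF h_mono h(1) order]
  have "run pi (h t) = run sigma t" if t: "t < ?m" for t
  proof -
    have "run sigma t + run pi (h 0) \<le> run sigma 0 + run pi (h t)"
      and "run sigma (?m - 1) + run pi (h t) \<le> run sigma t + run pi (h (?m - 1))"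
      using growth t by auto
    moreover have "run sigma (?m - 1) = Suc k" "run pi (h (?m - 1)) \<le> Suc k"
      using run_last[of sigma] run_le[of pi] sigma pi by (auto simp: P_def)
    moreover have "run sigma 0 \<le> run pi (h 0)"
      using run_0[of sigma] run_0[of pi] run_mono[of 0 "h 0" pi] by simp
    ultimately show ?thesis by linarith
  qed
  then have "run_matching sigma pi h"
    using h order by (auto simp: run_matching_def)
  then show ?thesis by blast
qed

lemma pattern_iff_subword:
  assumes "sigma \<in> P k" "pi \<in> P k"
  shows "contains_pattern sigma pi \<longleftrightarrow> subseq (f sigma) (f pi)"
  using assms pattern_imp_run_matching run_matching_imp_subword
    subword_imp_run_matching run_matching_imp_pattern
  by (metis P_def mem_Collect_eq)

text \<open>Equal code words give an occurrence of sigma in pi of full length, so sigma = pi.\<close>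
lemma f_inj:
  assumes sigma: "is_perm sigma" and pi: "is_perm pi" and eq: "f sigma = f pi"
  shows "sigma = pi"
proof -
  obtain h where "run_matching sigma pi h"
    using subword_imp_run_matching[OF sigma pi] eq by auto
  then obtain s where s: "subseq s pi" "order_iso_seq sigma s"
    using run_matching_imp_pattern[OF sigma pi] unfolding contains_pattern_def by blast
  then have "length s = length pi"
    using eq length_f[of sigma] length_f[of pi] by (simp add: order_iso_seq_def)
  then have "s = pi" using subseq_same_length s(1) by blast
  then show ?thesis using perm_eq_if_order_iso[OF sigma pi] s(2) by simp
qed

text \<open>The
  level of a position is the value w assigns to the letter placed there; decoding is inverse
  to f once the levels are shown to be the run numbers.\<close>
definition decode :: "nat list \<Rightarrow> nat list" where
  "decode w = sort_key (\<lambda>c. (w ! (c - 1), c)) [1..<Suc (length w)]"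

definition level :: "nat list \<Rightarrow> nat \<Rightarrow> nat" where
  "level w i = w ! (decode w ! i - 1)"

lemma decode_perm:
  assumes "w \<noteq> []"
  shows "is_perm (decode w)" and "length (decode w) = length w"
proof -
  show length: "length (decode w) = length w"
    by (simp add: decode_def del: upt_Suc)
  then have "decode w \<noteq> []" using assms by auto
  then show "is_perm (decode w)"
    using length by (auto simp: decode_def is_perm_def simp del: upt_Suc)
qed

lemma decode_sorted:
  assumes "i < i'" "i' < length w"
  shows "level w i < level w i' \<or> (level w i = level w i' \<and> decode w ! i < decode w ! i')"
proof -
  have "sorted (map (\<lambda>c. (w ! (c - 1), c)) (decode w))"
    by (simp add: decode_def del: upt_Suc)
  then have "(level w i, decode w ! i) \<le> (level w i', decode w ! i')"
    using assms by (auto simp: sorted_iff_nth_mono level_def decode_def simp del: upt_Suc)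
  moreover have "decode w ! i \<noteq> decode w ! i'"
    using assms by (simp add: decode_def nth_eq_iff_index_eq del: upt_Suc)
  ultimately show ?thesis by auto
qed

lemma level_letter:
  assumes "w \<noteq> []" "x < length w"
  shows "\<exists>t < length w. decode w ! t = Suc x \<and> level w t = w ! x"
  using perm_pos[OF decode_perm(1)[OF assms(1)], of "Suc x"] assms
  by (auto simp: decode_perm(2)[OF assms(1)] level_def)

context
  fixes w :: "nat list" and k :: nat
  assumes w: "w \<in> Ahat (Suc k)"
begin

lemma word_nonempty: "w \<noteq> []"
  using w by (simp add: Ahat_def)

lemma word_letters: "set w = {1..Suc k}"
proof
  show "set w \<subseteq> {1..Suc k}"
  proof
    fix x assume x: "x \<in> set w"
    have "0 \<notin> set w" "Max (set w) = Suc k" using w by (auto simp: Ahat_def)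
    then show "x \<in> {1..Suc k}" using x Max_ge[OF finite_set x] by (cases x) auto
  qed
  show "{1..Suc k} \<subseteq> set w" using w by (auto simp: Ahat_def)
qed

lemma level_range:
  assumes "i < length w"
  shows "level w i \<in> {1..Suc k}"
proof -
  have "decode w ! i - 1 < length w"
    using perm_nth[OF decode_perm(1)[OF word_nonempty], of i] assms
    by (auto simp: decode_perm(2)[OF word_nonempty])
  then show ?thesis using word_letters nth_mem unfolding level_def by blast
qed

lemma level_mono: "i \<le> i' \<Longrightarrow> i' < length w \<Longrightarrow> level w i \<le> level w i'"
  using decode_sorted[of i i' w] by (cases "i = i'") auto

lemma level_attained:
  assumes "j \<in> {1..Suc k}"
  shows "\<exists>t < length w. level w t = j"
proof -
  have "j \<in> set w" using assms word_letters by simp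
  then obtain x where "x < length w" "w ! x = j" by (auto simp: in_set_conv_nth)
  then show ?thesis using level_letter[OF word_nonempty] by fastforce
qed

text \<open>By (AC1) the levels, which are weakly increasing along positions, never skip a value.\<close>
lemma level_step:
  assumes "Suc i < length w"
  shows "level w (Suc i) \<le> Suc (level w i)"
proof (rule ccontr)
  assume jump: "\<not> level w (Suc i) \<le> Suc (level w i)"
  then have "Suc (level w i) \<in> {1..Suc k}" using level_range[OF assms] by auto
  then obtain t where t: "t < length w" "level w t = Suc (level w i)"
    using level_attained by blast
  show False
  proof (cases "t \<le> i")
    case True
    then show False using level_mono[of t i] t assms by simp
  next
    case False
    then show False using level_mono[of "Suc i" t] t jump by simp
  qed
qed

lemma same_level_order:
  assumes "t \<le> i" "i < length w" "level w t = level w i"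
  shows "decode w ! t \<le> decode w ! i"
  using decode_sorted[of t i w] assms by (cases "t = i") auto

text \<open>The descents of the decoded permutation are exactly the positions where the level grows:
  when it grows from j to j + 1, condition (AC2) provides a letter of level j + 1 that is smaller
  than a letter of level j.\<close>
lemma descent_iff_level_step:
  "i \<in> descents (decode w) \<longleftrightarrow> Suc i < length w \<and> level w (Suc i) = Suc (level w i)"
proof
  assume "i \<in> descents (decode w)"
  then have i: "Suc i < length w" and drop: "decode w ! Suc i < decode w ! i"
    by (auto simp: descents_def decode_perm(2)[OF word_nonempty])
  then show "Suc i < length w \<and> level w (Suc i) = Suc (level w i)"
    using decode_sorted[of i "Suc i" w] level_step[OF i] by auto
next
  assume "Suc i < length w \<and> level w (Suc i) = Suc (level w i)"
  then have i: "Suc i < length w" and jump: "level w (Suc i) = Suc (level w i)" by auto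
  let ?j = "level w i"
  have "?j \<in> {1..<Suc k}" using level_range[of i] level_range[OF i] jump i by auto
  then obtain a b where ab: "a < b" "b < length w" "w ! a = Suc ?j" "w ! b = ?j"
    using w unfolding Ahat_def by blast
  obtain ta where ta: "ta < length w" "decode w ! ta = Suc a" "level w ta = Suc ?j"
    using level_letter[OF word_nonempty, of a] ab by auto
  obtain tb where tb: "tb < length w" "decode w ! tb = Suc b" "level w tb = ?j"
    using level_letter[OF word_nonempty, of b] ab by auto
  have "Suc i \<le> ta" using level_mono[of ta i] ta i by (cases "Suc i \<le> ta") auto
  then have "decode w ! Suc i \<le> Suc a" using same_level_order ta jump by metis
  moreover have "tb \<le> i" using level_mono[of "Suc i" tb] tb jump by (cases "tb \<le> i") auto
  then have "Suc b \<le> decode w ! i" using same_level_order tb i by (metis Suc_lessD)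
  ultimately show "i \<in> descents (decode w)"
    using ab i by (auto simp: descents_def decode_perm(2)[OF word_nonempty])
qed

lemma run_decode: "i < length w \<Longrightarrow> run (decode w) i = level w i"
proof (induction i)
  case 0
  obtain t where "t < length w" "level w t = 1" using level_attained[of 1] by auto
  then show ?case using level_mono[of 0 t] level_range[of 0] run_0 by fastforce
next
  case (Suc i)
  then show ?case
    using run_Suc[of "decode w" i] descent_iff_level_step[of i] level_step[OF Suc.prems]
      level_mono[of i "Suc i"] by auto
qed

lemma decode_in_P: "decode w \<in> P k"
proof -
  let ?n = "length w"
  obtain t where t: "t < ?n" "level w t = Suc k" using level_attained[of "Suc k"] by auto
  then have "level w (?n - 1) = Suc k"
    using level_mono[of t "?n - 1"] level_range[of "?n - 1"] by fastforce
  then have "card (descents (decode w)) = k"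
    using run_last[of "decode w"] run_decode[of "?n - 1"] t(1)
    by (simp add: decode_perm(2)[OF word_nonempty])
  then show ?thesis using decode_perm(1)[OF word_nonempty] by (simp add: P_def)
qed

lemma f_decode: "f (decode w) = w"
proof (rule nth_equalityI)
  show "length (f (decode w)) = length w"
    by (simp add: length_f decode_perm(2)[OF word_nonempty])
  fix j assume "j < length (f (decode w))"
  then have j: "j < length w" by (simp add: length_f decode_perm(2)[OF word_nonempty])
  then obtain t where t: "t < length w" "decode w ! t = Suc j" "level w t = w ! j"
    using level_letter[OF word_nonempty] by blast
  then have "pos (decode w) (Suc j) = t"
    using pos_nth[OF decode_perm(1)[OF word_nonempty], of t]
    by (simp add: decode_perm(2)[OF word_nonempty])
  then show "f (decode w) ! j = w ! j"
    using f_nth[of j "decode w"] run_decode t j by (simp add: decode_perm(2)[OF word_nonempty])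
qed

end

theorem mainTheorem3:
  fixes k :: nat
  shows "bij_betw f (P k) (Ahat (Suc k)) \<and>
         (\<forall>sigma \<in> P k. \<forall>pi \<in> P k.
            contains_pattern sigma pi \<longleftrightarrow> subseq (f sigma) (f pi))"
proof
  have "inj_on f (P k)"
    using f_inj by (auto intro!: inj_onI simp: P_def)
  moreover have "f ` P k = Ahat (Suc k)"
  proof
    show "f ` P k \<subseteq> Ahat (Suc k)" using f_in_Ahat by blast
    show "Ahat (Suc k) \<subseteq> f ` P k"
    proof
      fix w assume "w \<in> Ahat (Suc k)"
      then show "w \<in> f ` P k" using decode_in_P f_decode by (metis image_eqI)
    qed
  qed
  ultimately show "bij_betw f (P k) (Ahat (Suc k))"
    by (simp add: bij_betw_def)
  show "\<forall>sigma \<in> P k. \<forall>pi \<in> P k. contains_pattern sigma pi \<longleftrightarrow> subseq (f sigma) (f pi)"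
    using pattern_iff_subword by blast
qed

end
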